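(* Let $G=(V,v,E)$ be a directed graph with $V=\{1,\dots,n\}$, target node $v$, edge set $E$, and let $Z$ be a set of ordered node pairs with $Z\cap E=\emptyset$. For $\mathbf{y}\in\{0,1\}^{Z}$ with support $Y$, let $\mathcal{FR}(\mathbf{y})\ge0$ be the expected first return time to $v$ of the PageRank random walk on $(V,E\cup Y)$. Let $\mathcal{Y}$ be a constraint set with $\mathcal{Y}\cap\{0,1\}^{Z}\ne\emptyset$, and consider the problem $\min\{\mathcal{FR}(\mathbf{y}):\mathbf{y}\in\mathcal{Y}\cap\{0,1\}^{Z}\}$. For disjoint $S,N\subseteq Z$ let $\gamma(S,N)=\min\{\mathcal{FR}(\mathbf{y}): y_e=1\ \forall e\in S,\ y_e=0\ \forall e\in N,\ \mathbf{y}\in\{0,1\}^{Z}\}$. For $\bar{\mathbf{y}}\in\mathcal{Y}\cap\{0,1\}^{Z}$ with support $\bar Y$ define the cut $\mathrm{C}_1(\bar{\mathbf{y}})$: $\theta\ge\mathcal{FR}(\bar{\mathbf{y}})+\sum_{e\in\bar Y}\min\{0,\gamma(\emptyset,\{e\})-\mathcal{FR}(\bar{\mathbf{y}})\}(1-y_e)+\sum_{e\in Z\setminus\bar Y}\min\{0,\gamma(\{e\},\emptyset)-\mathcal{FR}(\bar{\mathbf{y}})\}y_e$, and, for a chosen ordering $e^1,\dots,e^K$ of $Z\setminus\bar Y$, the cut $\mathrm{C}_2(\bar{\mathbf{y}})$: $\theta\ge\mathcal{FR}(\bar{\mathbf{y}})+\sum_{e\in\bar Y}\min\{0,\gamma(\emptyset,\{e\})-\mathcal{FR}(\bar{\mathbf{y}})\}(1-y_e)+\sum_{k=1}^{K}\min\{0,-\mathcal{FR}(\bar{\mathbf{y}})+\gamma(\{e^k\},\{e^{k+1},\dots,e^K\})\}y_{e^k}$.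 Fix one of the two families $\mathrm{C}\in\{\mathrm{C}_1,\mathrm{C}_2\}$ and consider the cutting plane method: start with an empty cut set $\mathcal{C}$; repeatedly solve the relaxed master problem $\min\{\theta:(\theta,\mathbf{y})\text{ satisfies all cuts in }\mathcal{C},\ \mathbf{y}\in\mathcal{Y}\cap\{0,1\}^{Z},\ \theta\in\mathbb{R}_+\}$ to obtain an optimal $(\theta^*,\mathbf{y}^* )$; if $\theta^*\ge\mathcal{FR}(\mathbf{y}^* )$ stop, otherwise add the cut $\mathrm{C}(\mathbf{y}^* )$ to $\mathcal{C}$ and repeat. Then this method terminates after finitely many iterations, and at termination $\mathbf{y}^*$ is an optimal solution of $\min\{\mathcal{FR}(\mathbf{y}):\mathbf{y}\in\mathcal{Y}\cap\{0,1\}^{Z}\}$. Equivalently, this problem has the same optimal value as $\min\{\theta: (\theta,\mathbf{y})\text{ satisfies }\mathrm{C}(\bar{\mathbf{y}})\ \forall\bar{\mathbf{y}}\in\mathcal{Y}\cap\{0,1\}^{Z},\ \mathbf{y}\in\mathcal{Y}\cap\{0,1\}^{Z},\ \theta\in\mathbb{R}_+\}$.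
   Context: The PageRank random walk is the random walk defined by the PageRank (Google) matrix with fixed damping and teleportation, as in Csáji–Jungers–Blondel; the expected first return time to $v$ is the expected number of steps for the walk started at $v$ to return to $v$ (the reciprocal of $v$'s PageRank). *)

theory Defs
  imports Complex_Main
begin

type_synonym edge = "nat \<times> nat"

definition outdeg :: "edge set \<Rightarrow> nat \<Rightarrow> nat" where
  "outdeg A i = card {j. (i, j) \<in> A}"

definition google :: "real \<Rightarrow> (nat \<Rightarrow> real) \<Rightarrow> edge set \<Rightarrow> nat \<Rightarrow> nat \<Rightarrow> real" where
  "google c z A i j =
     c * (if outdeg A i = 0 then z j
          else if (i, j) \<in> A then 1 / real (outdeg A i) else 0)
     + (1 - c) * z j"

definition pagerank :: "nat \<Rightarrow> real \<Rightarrow> (nat \<Rightarrow> real) \<Rightarrow> edge set \<Rightarrow> nat \<Rightarrow> real" where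
  "pagerank n c z A = (THE \<pi>. (\<forall>j. 0 \<le> \<pi> j) \<and> (\<forall>j. j \<notin> {1..n} \<longrightarrow> \<pi> j = 0)
       \<and> (\<Sum>i\<in>{1..n}. \<pi> i) = 1
       \<and> (\<forall>j\<in>{1..n}. (\<Sum>i\<in>{1..n}. \<pi> i * google c z A i j) = \<pi> j))"

text \<open>Expected first return time to v = reciprocal of v's PageRank.\<close>
definition first_return :: "nat \<Rightarrow> real \<Rightarrow> (nat \<Rightarrow> real) \<Rightarrow> nat \<Rightarrow> edge set \<Rightarrow> real" where
  "first_return n c z v A = 1 / pagerank n c z A v"

definition FR :: "nat \<Rightarrow> real \<Rightarrow> (nat \<Rightarrow> real) \<Rightarrow> nat \<Rightarrow> edge set \<Rightarrow> edge set \<Rightarrow> real" where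
  "FR n c z v E Y = first_return n c z v (E \<union> Y)"

text \<open>Binary vectors in {0,1}^Z are represented by their supports Y \<subseteq> Z; y_e = ind Y e.\<close>
definition ind :: "edge set \<Rightarrow> edge \<Rightarrow> real" where
  "ind Y e = (if e \<in> Y then 1 else 0)"

definition gamma :: "(edge set \<Rightarrow> real) \<Rightarrow> edge set \<Rightarrow> edge set \<Rightarrow> edge set \<Rightarrow> real" where
  "gamma fr Z S N = Min (fr ` {Y. Y \<subseteq> Z \<and> S \<subseteq> Y \<and> Y \<inter> N = {}})"

definition cut1 :: "(edge set \<Rightarrow> real) \<Rightarrow> edge set \<Rightarrow> edge set \<Rightarrow> edge set \<Rightarrow> real" where
  "cut1 fr Z Yb Y = fr Yb
     + (\<Sum>e\<in>Yb. min 0 (gamma fr Z {} {e} - fr Yb) * (1 - ind Y e))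
     + (\<Sum>e\<in>Z - Yb. min 0 (gamma fr Z {e} {} - fr Yb) * ind Y e)"

text \<open>Right-hand side of cut C2(ybar) at y, where ord Yb = [e^1,...,e^K] orders Z - Yb.\<close>
definition cut2 :: "(edge set \<Rightarrow> real) \<Rightarrow> edge set \<Rightarrow> (edge set \<Rightarrow> edge list)
                     \<Rightarrow> edge set \<Rightarrow> edge set \<Rightarrow> real" where
  "cut2 fr Z ord Yb Y = fr Yb
     + (\<Sum>e\<in>Yb. min 0 (gamma fr Z {} {e} - fr Yb) * (1 - ind Y e))
     + (\<Sum>k<length (ord Yb). min 0 (- fr Yb + gamma fr Z {ord Yb ! k} (set (drop (Suc k) (ord Yb))))
                              * ind Y (ord Yb ! k))"

text \<open>Relaxed master problem with cut family cut, feasible supports F and cut set C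
  (the points ybar whose cuts have been added).\<close>
definition master_feasible :: "(edge set \<Rightarrow> edge set \<Rightarrow> real) \<Rightarrow> edge set set \<Rightarrow> edge set set
                                \<Rightarrow> real \<Rightarrow> edge set \<Rightarrow> bool" where
  "master_feasible ct F C \<theta> Y \<longleftrightarrow> 0 \<le> \<theta> \<and> Y \<in> F \<and> (\<forall>Yb\<in>C. ct Yb Y \<le> \<theta>)"

definition master_opt :: "(edge set \<Rightarrow> edge set \<Rightarrow> real) \<Rightarrow> edge set set \<Rightarrow> edge set set
                           \<Rightarrow> real \<Rightarrow> edge set \<Rightarrow> bool" where
  "master_opt ct F C \<theta> Y \<longleftrightarrow> master_feasible ct F C \<theta> Y
     \<and> (\<forall>\<theta>' Y'. master_feasible ct F C \<theta>' Y' \<longrightarrow> \<theta> \<le> \<theta>')"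

end

theory Submission
  imports Defs
begin

text \<open>
  Each cut \<open>C(ybar)\<close> is a lower bound for \<open>FR\<close> on all of \<open>{0,1}\<^sup>Z\<close> that is tight
  at \<open>ybar\<close>: a point \<open>y \<noteq> ybar\<close> either drops an edge \<open>e\<close> of \<open>ybar\<close> or adds an edge
  outside \<open>ybar\<close>, and the \<open>\<gamma>\<close>-term of that edge is at most \<open>FR(y)\<close> (for \<open>C\<^sub>2\<close> one takes the
  last added edge in the ordering). So a point whose cut is already present is never
  proposed again with \<open>\<theta> < FR\<close>, the method visits distinct points of a finite set and stops,
  and at termination \<open>\<theta>\<^sup>*\<close> is a lower bound for every \<open>FR(y)\<close> that is attained at \<open>y\<^sup>*\<close>.
  The constraint \<open>\<theta> \<ge> 0\<close> is harmless because \<open>FR \<ge> 0\<close>: the damped walk has a unique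
  stationary distribution (existence by a Neumann series, uniqueness by \<open>\<ell>\<^sub>1\<close>-contraction),
  so PageRank is a probability vector.
\<close>

definition stochastic_on :: "'a set \<Rightarrow> ('a \<Rightarrow> 'a \<Rightarrow> real) \<Rightarrow> bool" where
  "stochastic_on V P \<longleftrightarrow> (\<forall>i\<in>V. \<forall>j\<in>V. 0 \<le> P i j) \<and> (\<forall>i\<in>V. (\<Sum>j\<in>V. P i j) = 1)"

definition damped_stationary ::
    "'a set \<Rightarrow> real \<Rightarrow> ('a \<Rightarrow> 'a \<Rightarrow> real) \<Rightarrow> ('a \<Rightarrow> real) \<Rightarrow> ('a \<Rightarrow> real) \<Rightarrow> bool" where
  "damped_stationary V c P z \<pi> \<longleftrightarrow> (\<forall>j. 0 \<le> \<pi> j) \<and> (\<forall>j. j \<notin> V \<longrightarrow> \<pi> j = 0) \<and> sum \<pi> V = 1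
     \<and> (\<forall>j\<in>V. (\<Sum>i\<in>V. \<pi> i * (c * P i j + (1 - c) * z j)) = \<pi> j)"

primrec walk_distr :: "'a set \<Rightarrow> ('a \<Rightarrow> 'a \<Rightarrow> real) \<Rightarrow> ('a \<Rightarrow> real) \<Rightarrow> nat \<Rightarrow> 'a \<Rightarrow> real" where
  "walk_distr V P z 0 = z"
| "walk_distr V P z (Suc k) = (\<lambda>j. \<Sum>i\<in>V. walk_distr V P z k i * P i j)"

lemma sum_mult_stochastic:
  assumes "stochastic_on V P"
  shows "(\<Sum>j\<in>V. \<Sum>i\<in>V. x i * P i j) = (\<Sum>i\<in>V. x i)"
proof -
  have "(\<Sum>j\<in>V. \<Sum>i\<in>V. x i * P i j) = (\<Sum>i\<in>V. x i * (\<Sum>j\<in>V. P i j))"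
    by (subst sum.swap) (simp add: sum_distrib_left)
  also have "\<dots> = (\<Sum>i\<in>V. x i)"
    using assms by (simp add: stochastic_on_def)
  finally show ?thesis .
qed

lemma l1_norm_mult_stochastic_le:
  assumes "stochastic_on V P"
  shows "(\<Sum>j\<in>V. \<bar>\<Sum>i\<in>V. x i * P i j\<bar>) \<le> (\<Sum>i\<in>V. \<bar>x i\<bar>)"
proof -
  have "(\<Sum>j\<in>V. \<bar>\<Sum>i\<in>V. x i * P i j\<bar>) \<le> (\<Sum>j\<in>V. \<Sum>i\<in>V. \<bar>x i\<bar> * P i j)"
    using assms by (intro sum_mono order.trans[OF sum_abs]) (simp add: abs_mult stochastic_on_def)
  also have "\<dots> = (\<Sum>i\<in>V. \<bar>x i\<bar>)"
    using assms by (rule sum_mult_stochastic)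
  finally show ?thesis .
qed

lemma walk_distr_nonneg:
  assumes "stochastic_on V P" "\<forall>j\<in>V. 0 \<le> z j" "j \<in> V"
  shows "0 \<le> walk_distr V P z k j"
  using assms(3) by (induction k arbitrary: j)
    (use assms(1,2) in \<open>auto simp: stochastic_on_def intro!: sum_nonneg\<close>)

lemma walk_distr_sum:
  assumes "stochastic_on V P" "sum z V = 1"
  shows "sum (walk_distr V P z k) V = 1"
  by (induction k) (simp_all add: assms sum_mult_stochastic)

lemma damped_step_eq:
  fixes \<pi> :: "'a \<Rightarrow> real"
  assumes "sum \<pi> V = 1"
  shows "(\<Sum>i\<in>V. \<pi> i * (c * P i j + (1 - c) * z j)) = c * (\<Sum>i\<in>V. \<pi> i * P i j) + (1 - c) * z j"
proof -
  have "(\<Sum>i\<in>V. \<pi> i * (c * P i j + (1 - c) * z j))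
      = (\<Sum>i\<in>V. c * (\<pi> i * P i j) + (1 - c) * z j * \<pi> i)"
    by (intro sum.cong) (simp_all add: algebra_simps)
  also have "\<dots> = c * (\<Sum>i\<in>V. \<pi> i * P i j) + (1 - c) * z j * sum \<pi> V"
    by (simp add: sum.distrib sum_distrib_left)
  finally show ?thesis using assms by simp
qed

text \<open>The witness is the Neumann series \<open>s = \<Sum>\<^sub>k c\<^sup>k z P\<^sup>k = z (I - c P)\<^sup>-\<^sup>1\<close>.\<close>
lemma resolvent_solution_exists:
  assumes V: "finite V" and c: "0 \<le> c" "c < 1" and P: "stochastic_on V P"
    and z: "\<forall>j\<in>V. 0 \<le> z j" "sum z V = 1"
  obtains s where "\<forall>j\<in>V. 0 \<le> s j" and "\<forall>j\<in>V. s j = c * (\<Sum>i\<in>V. s i * P i j) + z j"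
proof
  define w where "w = walk_distr V P z"
  have w_nonneg: "0 \<le> w k j" if "j \<in> V" for k j
    unfolding w_def using P z(1) that by (rule walk_distr_nonneg)
  have w_le_1: "w k j \<le> 1" if "j \<in> V" for k j
  proof -
    have "w k j \<le> sum (w k) V"
      using V that w_nonneg by (intro member_le_sum) auto
    then show ?thesis using walk_distr_sum[OF P z(2)] by (simp add: w_def)
  qed
  define s where "s j = (\<Sum>k. c^k * w k j)" for j
  have sums: "(\<lambda>k. c^k * w k j) sums s j" if "j \<in> V" for j
  proof -
    have "summable (\<lambda>k. c^k * w k j)"
      using c w_nonneg[OF that] w_le_1[OF that]
      by (intro summable_comparison_test[OF _ summable_geometric[of c]])
         (auto intro!: mult_left_le)
    then show ?thesis by (simp add: s_def summable_sums)
  qed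
  show "\<forall>j\<in>V. 0 \<le> s j"
  proof
    fix j assume "j \<in> V"
    then show "0 \<le> s j"
      unfolding s_def using sums_summable[OF sums] c w_nonneg by (simp add: suminf_nonneg)
  qed
  show "\<forall>j\<in>V. s j = c * (\<Sum>i\<in>V. s i * P i j) + z j"
  proof
    fix j assume j: "j \<in> V"
    have "(\<lambda>k. \<Sum>i\<in>V. c^k * w k i * P i j) sums (\<Sum>i\<in>V. s i * P i j)"
      using sums by (intro sums_sum sums_mult2) auto
    then have "(\<lambda>k. c * (\<Sum>i\<in>V. c^k * w k i * P i j)) sums (c * (\<Sum>i\<in>V. s i * P i j))"
      by (rule sums_mult)
    moreover have "(\<lambda>k. c * (\<Sum>i\<in>V. c^k * w k i * P i j)) = (\<lambda>k. c^Suc k * w (Suc k) j)"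
      by (simp add: w_def sum_distrib_left mult_ac)
    ultimately have "(\<lambda>k. c^Suc k * w (Suc k) j) sums (c * (\<Sum>i\<in>V. s i * P i j))"
      by simp
    then have "(\<lambda>k. c^k * w k j) sums (c * (\<Sum>i\<in>V. s i * P i j) + z j)"
      by (subst (asm) sums_Suc_iff) (simp add: w_def)
    then show "s j = c * (\<Sum>i\<in>V. s i * P i j) + z j"
      using sums[OF j] sums_unique2 by blast
  qed
qed

lemma damped_stationary_exists:
  assumes V: "finite V" and c: "0 \<le> c" "c < 1" and P: "stochastic_on V P"
    and z: "\<forall>j\<in>V. 0 \<le> z j" "sum z V = 1"
  shows "\<exists>\<pi>. damped_stationary V c P z \<pi>"
proof -
  obtain s where s_nonneg: "\<forall>j\<in>V. 0 \<le> s j"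
    and s_eq: "\<forall>j\<in>V. s j = c * (\<Sum>i\<in>V. s i * P i j) + z j"
    by (rule resolvent_solution_exists[OF assms])
  have "sum s V = (\<Sum>j\<in>V. c * (\<Sum>i\<in>V. s i * P i j) + z j)"
    using s_eq by (intro sum.cong) blast+
  also have "\<dots> = c * (\<Sum>j\<in>V. \<Sum>i\<in>V. s i * P i j) + sum z V"
    by (simp add: sum.distrib sum_distrib_left)
  finally have "sum s V = c * (\<Sum>j\<in>V. \<Sum>i\<in>V. s i * P i j) + sum z V" .
  then have s_fix: "sum s V = c * sum s V + 1"
    using P z(2) by (simp add: sum_mult_stochastic)
  have s_sum: "(1 - c) * sum s V = 1"
    unfolding left_diff_distrib using s_fix by linarith
  define \<pi> where "\<pi> j = (if j \<in> V then (1 - c) * s j else 0)" for j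
  have \<pi>_sum: "sum \<pi> V = 1"
    using s_sum by (simp add: \<pi>_def sum_distrib_left)
  have "damped_stationary V c P z \<pi>"
    unfolding damped_stationary_def
  proof (intro conjI allI impI ballI \<pi>_sum)
    fix j
    show "0 \<le> \<pi> j" using s_nonneg c by (simp add: \<pi>_def)
    show "j \<notin> V \<Longrightarrow> \<pi> j = 0" by (simp add: \<pi>_def)
    assume j: "j \<in> V"
    have "(\<Sum>i\<in>V. \<pi> i * (c * P i j + (1 - c) * z j)) = c * (\<Sum>i\<in>V. \<pi> i * P i j) + (1 - c) * z j"
      by (rule damped_step_eq[OF \<pi>_sum])
    also have "\<dots> = (1 - c) * (c * (\<Sum>i\<in>V. s i * P i j) + z j)"
      by (simp add: \<pi>_def sum_distrib_left algebra_simps)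
    also have "\<dots> = \<pi> j"
      using j s_eq[rule_format, OF j] by (simp add: \<pi>_def)
    finally show "(\<Sum>i\<in>V. \<pi> i * (c * P i j + (1 - c) * z j)) = \<pi> j" .
  qed
  then show ?thesis by blast
qed

text \<open>Two stationary vectors differ by \<open>d = c d P\<close>, and \<open>P\<close> does not increase the \<open>\<ell>\<^sub>1\<close> norm.\<close>
lemma damped_stationary_unique:
  assumes V: "finite V" and c: "0 \<le> c" "c < 1" and P: "stochastic_on V P"
    and \<pi>: "damped_stationary V c P z \<pi>" and \<pi>': "damped_stationary V c P z \<pi>'"
  shows "\<pi> = \<pi>'"
proof -
  define d where "d i = \<pi> i - \<pi>' i" for i
  have eq: "\<pi> j = c * (\<Sum>i\<in>V. \<pi> i * P i j) + (1 - c) * z j"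
    and eq': "\<pi>' j = c * (\<Sum>i\<in>V. \<pi>' i * P i j) + (1 - c) * z j" if "j \<in> V" for j
    using \<pi> \<pi>' that by (auto simp: damped_stationary_def damped_step_eq)
  have dP: "(\<Sum>i\<in>V. d i * P i j) = (\<Sum>i\<in>V. \<pi> i * P i j) - (\<Sum>i\<in>V. \<pi>' i * P i j)" for j
    by (simp add: d_def left_diff_distrib sum_subtractf)
  have "d j = c * (\<Sum>i\<in>V. d i * P i j)" if "j \<in> V" for j
    using eq[OF that] eq'[OF that] unfolding dP by (simp only: d_def right_diff_distrib)
  then have d_eq: "\<bar>d j\<bar> = c * \<bar>\<Sum>i\<in>V. d i * P i j\<bar>" if "j \<in> V" for j
    using that c by (simp add: abs_mult)
  have "(\<Sum>j\<in>V. \<bar>d j\<bar>) \<le> c * (\<Sum>j\<in>V. \<bar>d j\<bar>)"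
    using d_eq c l1_norm_mult_stochastic_le[OF P, of d]
    by (simp add: sum_distrib_left[symmetric] mult_left_mono)
  then have "(1 - c) * (\<Sum>j\<in>V. \<bar>d j\<bar>) \<le> 0"
    by (simp add: left_diff_distrib)
  then have "(\<Sum>j\<in>V. \<bar>d j\<bar>) \<le> 0"
    using c by (simp add: mult_le_0_iff)
  then have "(\<Sum>j\<in>V. \<bar>d j\<bar>) = 0"
    by (simp add: antisym sum_nonneg)
  then have "\<forall>j\<in>V. d j = 0"
    using V by (simp add: sum_nonneg_eq_0_iff)
  moreover have "\<pi> j = 0" "\<pi>' j = 0" if "j \<notin> V" for j
    using \<pi> \<pi>' that unfolding damped_stationary_def by blast+
  ultimately show ?thesis
    unfolding fun_eq_iff d_def by (metis right_minus_eq)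
qed

definition walk_matrix :: "(nat \<Rightarrow> real) \<Rightarrow> edge set \<Rightarrow> nat \<Rightarrow> nat \<Rightarrow> real" where
  "walk_matrix z A i j =
     (if outdeg A i = 0 then z j else if (i, j) \<in> A then 1 / real (outdeg A i) else 0)"

lemma google_eq_walk_matrix: "google c z A i j = c * walk_matrix z A i j + (1 - c) * z j"
  by (simp add: google_def walk_matrix_def)

lemma stochastic_walk_matrix:
  assumes V: "finite V" and A: "A \<subseteq> V \<times> V" and z: "\<forall>j\<in>V. 0 \<le> z j" "sum z V = 1"
  shows "stochastic_on V (walk_matrix z A)"
  unfolding stochastic_on_def
proof (intro conjI ballI)
  fix i j assume "i \<in> V" "j \<in> V"
  show "0 \<le> walk_matrix z A i j" using z \<open>j \<in> V\<close> by (simp add: walk_matrix_def)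
next
  fix i assume "i \<in> V"
  show "(\<Sum>j\<in>V. walk_matrix z A i j) = 1"
  proof (cases "outdeg A i = 0")
    case True
    then show ?thesis using z by (simp add: walk_matrix_def)
  next
    case False
    have succ: "{j \<in> V. (i, j) \<in> A} = {j. (i, j) \<in> A}" using A by auto
    have "(\<Sum>j\<in>V. walk_matrix z A i j) = (\<Sum>j\<in>V. if (i, j) \<in> A then 1 / real (outdeg A i) else 0)"
      using False by (simp add: walk_matrix_def)
    also have "\<dots> = (\<Sum>j\<in>{j \<in> V. (i, j) \<in> A}. 1 / real (outdeg A i))"
      by (rule sum.inter_filter[OF V, symmetric])
    also have "\<dots> = 1"
      using False by (simp add: succ outdeg_def)
    finally show ?thesis .
  qed
qed

lemma pagerank_damped_stationary:
  assumes A: "A \<subseteq> {1..n} \<times> {1..n}" and c: "0 \<le> c" "c < 1"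
    and z: "\<forall>j\<in>{1..n}. 0 \<le> z j" "(\<Sum>j\<in>{1..n}. z j) = 1"
  shows "damped_stationary {1..n} c (walk_matrix z A) z (pagerank n c z A)"
proof -
  have V: "finite {1..n}" by simp
  have P: "stochastic_on {1..n} (walk_matrix z A)"
    using V A z by (rule stochastic_walk_matrix)
  have "\<exists>!\<pi>. damped_stationary {1..n} c (walk_matrix z A) z \<pi>"
    using damped_stationary_exists[OF V c P z] damped_stationary_unique[OF V c P] by blast
  moreover have "pagerank n c z A = (THE \<pi>. damped_stationary {1..n} c (walk_matrix z A) z \<pi>)"
    unfolding pagerank_def damped_stationary_def google_eq_walk_matrix ..
  ultimately show ?thesis
    by (simp only: theI')
qed

lemma first_return_nonneg:
  assumes "A \<subseteq> {1..n} \<times> {1..n}" "0 \<le> c" "c < 1"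
    and "\<forall>j\<in>{1..n}. 0 \<le> z j" "(\<Sum>j\<in>{1..n}. z j) = 1"
  shows "0 \<le> first_return n c z v A"
  using pagerank_damped_stationary[OF assms]
  by (simp add: first_return_def damped_stationary_def)

lemma gamma_le:
  assumes "finite Z" "Y \<subseteq> Z" "S \<subseteq> Y" "Y \<inter> N = {}"
  shows "gamma fr Z S N \<le> fr Y"
proof -
  have "finite {Y. Y \<subseteq> Z \<and> S \<subseteq> Y \<and> Y \<inter> N = {}}"
    using assms(1) by (rule rev_finite_subset[OF finite_Pow_iff[THEN iffD2]]) auto
  then show ?thesis
    unfolding gamma_def using assms by (intro Min_le) auto
qed

lemma sum_le_member_nonpos:
  fixes f :: "'a \<Rightarrow> real"
  assumes "finite A" "a \<in> A" "\<And>x. x \<in> A \<Longrightarrow> f x \<le> 0"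
  shows "sum f A \<le> f a"
  using member_le_sum[of a A "\<lambda>x. - f x"] assms by (simp add: sum_negf)

lemma ex_last_nth_mem:
  assumes "set L \<inter> Y \<noteq> {}"
  shows "\<exists>k<length L. L ! k \<in> Y \<and> set (drop (Suc k) L) \<inter> Y = {}"
  using assms
proof (induction L)
  case (Cons x L)
  show ?case
  proof (cases "set L \<inter> Y = {}")
    case True
    then show ?thesis using Cons.prems by (intro exI[of _ 0]) auto
  next
    case False
    then obtain k where "k < length L" "L ! k \<in> Y" "set (drop (Suc k) L) \<inter> Y = {}"
      using Cons.IH by blast
    then show ?thesis by (intro exI[of _ "Suc k"]) auto
  qed
qed simp

lemma min_zero_mult_ind_nonpos:
  "min 0 a * ind Y e \<le> (0::real)" "min 0 a * (1 - ind Y e) \<le> (0::real)"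
  by (simp_all add: ind_def)

lemma removal_sum_le:
  assumes Z: "finite Z" and Yb: "Yb \<subseteq> Z" and Y: "Y \<subseteq> Z" and e: "e \<in> Yb" "e \<notin> Y"
  shows "(\<Sum>e\<in>Yb. min 0 (gamma fr Z {} {e} - fr Yb) * (1 - ind Y e)) \<le> fr Y - fr Yb"
proof -
  have "(\<Sum>e\<in>Yb. min 0 (gamma fr Z {} {e} - fr Yb) * (1 - ind Y e))
      \<le> min 0 (gamma fr Z {} {e} - fr Yb) * (1 - ind Y e)"
    using finite_subset[OF Yb Z] e(1) by (rule sum_le_member_nonpos) (rule min_zero_mult_ind_nonpos)
  also have "\<dots> \<le> gamma fr Z {} {e} - fr Yb"
    using e(2) by (simp add: ind_def)
  also have "\<dots> \<le> fr Y - fr Yb"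
    using gamma_le[OF Z Y, of "{}" "{e}" fr] e(2) by simp
  finally show ?thesis .
qed

lemma cut1_addition_sum_le:
  assumes Z: "finite Z" and Y: "Y \<subseteq> Z" and e: "e \<in> Y" "e \<notin> Yb"
  shows "(\<Sum>e\<in>Z - Yb. min 0 (gamma fr Z {e} {} - fr Yb) * ind Y e) \<le> fr Y - fr Yb"
proof -
  have "(\<Sum>e\<in>Z - Yb. min 0 (gamma fr Z {e} {} - fr Yb) * ind Y e)
      \<le> min 0 (gamma fr Z {e} {} - fr Yb) * ind Y e"
    using Z e Y by (intro sum_le_member_nonpos) (auto simp: min_zero_mult_ind_nonpos)
  also have "\<dots> \<le> gamma fr Z {e} {} - fr Yb"
    using e(1) by (simp add: ind_def)
  also have "\<dots> \<le> fr Y - fr Yb"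
    using gamma_le[OF Z Y, of "{e}" "{}" fr] e(1) by simp
  finally show ?thesis .
qed

text \<open>The last edge \<open>e\<^sup>k\<close> of the ordering that lies in \<open>Y\<close> certifies
  \<open>\<gamma>({e\<^sup>k}, {e\<^sup>k\<^sup>+\<^sup>1, \<dots>, e\<^sup>K}) \<le> FR(Y)\<close>.\<close>
lemma cut2_addition_sum_le:
  assumes Z: "finite Z" and Y: "Y \<subseteq> Z" and L: "set L = Z - Yb" and e: "e \<in> Y" "e \<notin> Yb"
  shows "(\<Sum>k<length L. min 0 (- fr Yb + gamma fr Z {L ! k} (set (drop (Suc k) L))) * ind Y (L ! k))
    \<le> fr Y - fr Yb"
proof -
  obtain k where k: "k < length L" "L ! k \<in> Y" and last: "set (drop (Suc k) L) \<inter> Y = {}"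
    using ex_last_nth_mem[of L Y] L e Y by blast
  have "(\<Sum>k<length L. min 0 (- fr Yb + gamma fr Z {L ! k} (set (drop (Suc k) L))) * ind Y (L ! k))
      \<le> min 0 (- fr Yb + gamma fr Z {L ! k} (set (drop (Suc k) L))) * ind Y (L ! k)"
    using k by (intro sum_le_member_nonpos) (auto simp: min_zero_mult_ind_nonpos)
  also have "\<dots> \<le> - fr Yb + gamma fr Z {L ! k} (set (drop (Suc k) L))"
    using k by (simp add: ind_def)
  also have "\<dots> \<le> fr Y - fr Yb"
    using gamma_le[OF Z Y, of "{L ! k}" "set (drop (Suc k) L)" fr] k last by auto
  finally show ?thesis .
qed

lemma cut1_self: "cut1 fr Z Y Y = fr Y"
  by (simp add: cut1_def ind_def)

lemma cut2_self:
  assumes "set (ord Y) = Z - Y"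
  shows "cut2 fr Z ord Y Y = fr Y"
proof -
  have "ind Y (ord Y ! k) = 0" if "k < length (ord Y)" for k
    using assms nth_mem[OF that] by (auto simp: ind_def)
  then show ?thesis by (simp add: cut2_def ind_def)
qed

lemma cut_le_if_bounds:
  fixes R A :: real
  assumes "R \<le> 0" "A \<le> 0"
    and "\<And>e. e \<in> Yb \<Longrightarrow> e \<notin> Y \<Longrightarrow> R \<le> fr Y - fr Yb"
    and "\<And>e. e \<in> Y \<Longrightarrow> e \<notin> Yb \<Longrightarrow> A \<le> fr Y - fr Yb"
  shows "fr Yb + R + A \<le> fr Y"
proof (cases "Y = Yb")
  case False
  then consider e where "e \<in> Yb" "e \<notin> Y" | e where "e \<in> Y" "e \<notin> Yb"
    by blast
  then show ?thesis
    by cases (use assms in fastforce)+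
qed (use assms in simp)

lemma cut1_le:
  assumes Z: "finite Z" and Yb: "Yb \<subseteq> Z" and Y: "Y \<subseteq> Z"
  shows "cut1 fr Z Yb Y \<le> fr Y"
  unfolding cut1_def
  by (rule cut_le_if_bounds[OF _ _ removal_sum_le[OF Z Yb Y] cut1_addition_sum_le[OF Z Y]])
    (simp_all add: sum_nonpos min_zero_mult_ind_nonpos)

lemma cut2_le:
  assumes Z: "finite Z" and Yb: "Yb \<subseteq> Z" and Y: "Y \<subseteq> Z" and ord: "set (ord Yb) = Z - Yb"
  shows "cut2 fr Z ord Yb Y \<le> fr Y"
  unfolding cut2_def
  by (rule cut_le_if_bounds[OF _ _ removal_sum_le[OF Z Yb Y] cut2_addition_sum_le[OF Z Y ord]])
    (simp_all add: sum_nonpos min_zero_mult_ind_nonpos)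

lemma master_opt_exists:
  assumes "finite C" "finite F" "F \<noteq> {}"
  shows "\<exists>\<theta> Y. master_opt ct F C \<theta> Y"
proof -
  define h where "h Y = Max (insert 0 ((\<lambda>Yb. ct Yb Y) ` C))" for Y
  have h_feasible: "master_feasible ct F C (h Y) Y" if "Y \<in> F" for Y
    unfolding master_feasible_def h_def using that assms(1) by auto
  have h_le: "h Y \<le> \<theta>" if "master_feasible ct F C \<theta> Y" for \<theta> Y
    using that assms(1) unfolding master_feasible_def h_def by auto
  have "Min (h ` F) \<in> h ` F"
    using assms(2,3) by simp
  then obtain Y where Y: "Y \<in> F" "h Y = Min (h ` F)"
    by auto
  have "master_opt ct F C (h Y) Y"
    unfolding master_opt_def
  proof (intro conjI allI impI)
    show "master_feasible ct F C (h Y) Y" using Y(1) by (rule h_feasible)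
    fix \<theta>' Y' assume feasible: "master_feasible ct F C \<theta>' Y'"
    then have "h Y \<le> h Y'"
      using Y assms(2) by (simp add: master_feasible_def)
    also have "\<dots> \<le> \<theta>'"
      using feasible by (rule h_le)
    finally show "h Y \<le> \<theta>'" .
  qed
  then show ?thesis by blast
qed

locale cutting_plane =
  fixes ct :: "edge set \<Rightarrow> edge set \<Rightarrow> real" and F :: "edge set set" and fr :: "edge set \<Rightarrow> real"
  assumes finite_F: "finite F" and F_nonempty: "F \<noteq> {}"
    and cut_tight: "Y \<in> F \<Longrightarrow> ct Y Y = fr Y"
    and cut_le: "Yb \<in> F \<Longrightarrow> Y \<in> F \<Longrightarrow> ct Yb Y \<le> fr Y"
    and fr_nonneg: "Y \<in> F \<Longrightarrow> 0 \<le> fr Y"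
begin

lemma master_opt_in_F: "master_opt ct F C \<theta> Y \<Longrightarrow> Y \<in> F"
  by (simp add: master_opt_def master_feasible_def)

lemma master_opt_le_fr:
  assumes "master_opt ct F C \<theta> Y'" "C \<subseteq> F" "Y \<in> F"
  shows "\<theta> \<le> fr Y"
proof -
  have "master_feasible ct F C (fr Y) Y"
    using assms(2,3) fr_nonneg cut_le by (auto simp: master_feasible_def)
  then show ?thesis
    using assms(1) unfolding master_opt_def by blast
qed

lemma fr_le_master_opt:
  assumes "master_opt ct F C \<theta> Y" "Y \<in> C"
  shows "fr Y \<le> \<theta>"
  using assms cut_tight[OF master_opt_in_F[OF assms(1)]]
  by (auto simp: master_opt_def master_feasible_def)

text \<open>A point whose cut has been added is never proposed again with \<open>\<theta> < fr\<close>, so an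
  infinite run would visit infinitely many distinct points of the finite set \<open>F\<close>.\<close>
lemma no_infinite_run:
  "\<not> (\<exists>\<theta>s Ys. \<forall>k::nat. master_opt ct F (Ys ` {..<k}) (\<theta>s k) (Ys k) \<and> \<theta>s k < fr (Ys k))"
proof
  assume "\<exists>\<theta>s Ys. \<forall>k::nat. master_opt ct F (Ys ` {..<k}) (\<theta>s k) (Ys k) \<and> \<theta>s k < fr (Ys k)"
  then obtain \<theta>s Ys where run: "\<forall>k::nat. master_opt ct F (Ys ` {..<k}) (\<theta>s k) (Ys k) \<and> \<theta>s k < fr (Ys k)"
    by blast
  then have opt: "master_opt ct F (Ys ` {..<k}) (\<theta>s k) (Ys k)" and gap: "\<theta>s k < fr (Ys k)" for k
    by simp_all
  have "Ys k \<noteq> Ys k'" if "k < k'" for k k'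
  proof
    assume "Ys k = Ys k'"
    then have "Ys k' \<in> Ys ` {..<k'}" using that by auto
    then have "fr (Ys k') \<le> \<theta>s k'" by (rule fr_le_master_opt[OF opt])
    then show False using gap[of k'] by simp
  qed
  then have "inj Ys"
    by (intro injI) (metis linorder_neqE_nat)
  moreover have "finite (range Ys)"
    using master_opt_in_F[OF opt] finite_F by (auto intro: finite_subset)
  ultimately show False
    using finite_imageD infinite_UNIV_nat by blast
qed

lemma optimal_at_termination:
  fixes K :: nat
  assumes "\<forall>k\<le>K. master_opt ct F (Ys ` {..<k}) (\<theta>s k) (Ys k)" "fr (Ys K) \<le> \<theta>s K" "Y \<in> F"
  shows "fr (Ys K) \<le> fr Y"
proof -
  have "Ys k \<in> F" if "k < K" for k
    using assms(1) that by (meson less_imp_le master_opt_in_F)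
  then have "Ys ` {..<K} \<subseteq> F"
    by auto
  moreover have "master_opt ct F (Ys ` {..<K}) (\<theta>s K) (Ys K)"
    using assms(1) by simp
  ultimately have "\<theta>s K \<le> fr Y"
    using assms(3) master_opt_le_fr by blast
  then show ?thesis
    using assms(2) by simp
qed

lemma master_opt_full_value:
  assumes "master_opt ct F F \<theta> Y"
  shows "\<theta> = Min (fr ` F)"
proof -
  have "Min (fr ` F) \<in> fr ` F"
    using finite_F F_nonempty by simp
  then obtain Y' where "Y' \<in> F" "fr Y' = Min (fr ` F)" by auto
  then have "\<theta> \<le> Min (fr ` F)"
    using master_opt_le_fr[OF assms order_refl] by metis
  moreover have "Min (fr ` F) \<le> fr Y"
    using finite_F master_opt_in_F[OF assms] by simp
  moreover have "fr Y \<le> \<theta>"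
    using fr_le_master_opt[OF assms master_opt_in_F[OF assms]] .
  ultimately show ?thesis by simp
qed

theorem cutting_plane_correct:
  "(\<forall>(K::nat) \<theta>s Ys. (\<forall>k<K. master_opt ct F (Ys ` {..<k}) (\<theta>s k) (Ys k) \<and> \<theta>s k < fr (Ys k))
        \<longrightarrow> (\<exists>\<theta> Y. master_opt ct F (Ys ` {..<K}) \<theta> Y))
   \<and> \<not> (\<exists>\<theta>s Ys. \<forall>k::nat. master_opt ct F (Ys ` {..<k}) (\<theta>s k) (Ys k) \<and> \<theta>s k < fr (Ys k))
   \<and> (\<forall>(K::nat) \<theta>s Ys. (\<forall>k\<le>K. master_opt ct F (Ys ` {..<k}) (\<theta>s k) (Ys k))
        \<and> (\<forall>k<K. \<theta>s k < fr (Ys k)) \<and> fr (Ys K) \<le> \<theta>s K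
        \<longrightarrow> (\<forall>Y\<in>F. fr (Ys K) \<le> fr Y))
   \<and> (\<exists>\<theta> Y. master_opt ct F F \<theta> Y)
   \<and> (\<forall>\<theta> Y. master_opt ct F F \<theta> Y \<longrightarrow> \<theta> = Min (fr ` F))"
proof (intro conjI allI impI ballI)
  show "\<exists>\<theta> Y. master_opt ct F (Ys ` {..<K}) \<theta> Y" for K :: nat and Ys :: "nat \<Rightarrow> edge set"
    using finite_F F_nonempty by (intro master_opt_exists) simp_all
  show "\<exists>\<theta> Y. master_opt ct F F \<theta> Y"
    using finite_F finite_F F_nonempty by (rule master_opt_exists)
  show "fr (Ys K) \<le> fr Y"
    if "(\<forall>k\<le>K. master_opt ct F (Ys ` {..<k}) (\<theta>s k) (Ys k))
      \<and> (\<forall>k<K. \<theta>s k < fr (Ys k)) \<and> fr (Ys K) \<le> \<theta>s K" "Y \<in> F"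
    for K :: nat and \<theta>s Ys Y
    using that by (intro optimal_at_termination[where \<theta>s = \<theta>s]) simp_all
qed (rule no_infinite_run, rule master_opt_full_value, assumption)

end

lemma cutting_plane_FR:
  assumes "0 \<le> c" "c < 1" "\<forall>j\<in>{1..n}. 0 \<le> z j" "(\<Sum>j\<in>{1..n}. z j) = 1"
    and "E \<subseteq> {1..n} \<times> {1..n}" "Z \<subseteq> {1..n} \<times> {1..n}" "F \<subseteq> Pow Z" "F \<noteq> {}"
    and ord: "\<And>Yb. set (ord Yb) = Z - Yb"
    and "ct = cut1 (FR n c z v E) Z \<or> ct = cut2 (FR n c z v E) Z ord"
  shows "cutting_plane ct F (FR n c z v E)"
proof
  have finite_Z: "finite Z"
    using assms(6) by (rule finite_subset) simp
  then show "finite F"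
    using assms(7) by (meson finite_Pow_iff finite_subset)
  show "F \<noteq> {}"
    by (fact assms(8))
  show "ct Y Y = FR n c z v E Y" for Y
    using assms(10) cut1_self cut2_self[where ord = ord, OF ord] by auto
  show "ct Yb Y \<le> FR n c z v E Y" if "Yb \<in> F" "Y \<in> F" for Yb Y
  proof -
    have Yb: "Yb \<subseteq> Z" and Y: "Y \<subseteq> Z"
      using that assms(7) by auto
    then show ?thesis
      using assms(10) cut1_le[OF finite_Z Yb Y] cut2_le[where ord = ord, OF finite_Z Yb Y ord] by auto
  qed
  show "0 \<le> FR n c z v E Y" if "Y \<in> F" for Y
  proof -
    have "E \<union> Y \<subseteq> {1..n} \<times> {1..n}"
      using that assms(5-7) by blast
    then show ?thesis
      unfolding FR_def using assms(1-4) by (intro first_return_nonneg) simp_all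
  qed
qed

theorem proposition3:
  fixes n v :: nat and c :: real and z :: "nat \<Rightarrow> real"
    and E Z :: "edge set" and F :: "edge set set"
    and ord :: "edge set \<Rightarrow> edge list"
    and ct :: "edge set \<Rightarrow> edge set \<Rightarrow> real"
  assumes "v \<in> {1..n}"
    and "0 < c" and "c < 1"
    and "\<forall>j\<in>{1..n}. 0 < z j" and "(\<Sum>j\<in>{1..n}. z j) = 1"
    and "E \<subseteq> {1..n} \<times> {1..n}" and "Z \<subseteq> {1..n} \<times> {1..n}" and "Z \<inter> E = {}"
    and "F \<subseteq> Pow Z" and "F \<noteq> {}"
    and "\<forall>Yb. distinct (ord Yb) \<and> set (ord Yb) = Z - Yb"
    and "ct = cut1 (FR n c z v E) Z \<or> ct = cut2 (FR n c z v E) Z ord"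
  shows
    \<comment> \<open>the relaxed master problem is always solvable along a run\<close>
    "(\<forall>(K::nat) \<theta>s Ys. (\<forall>k<K. master_opt ct F (Ys ` {..<k}) (\<theta>s k) (Ys k)
                        \<and> \<theta>s k < FR n c z v E (Ys k))
        \<longrightarrow> (\<exists>\<theta> Y. master_opt ct F (Ys ` {..<K}) \<theta> Y))
   \<comment> \<open>no run continues forever (finite termination)\<close>
   \<and> \<not> (\<exists>\<theta>s Ys. \<forall>k::nat. master_opt ct F (Ys ` {..<k}) (\<theta>s k) (Ys k)
                     \<and> \<theta>s k < FR n c z v E (Ys k))
   \<comment> \<open>at termination y* is optimal\<close>
   \<and> (\<forall>(K::nat) \<theta>s Ys. (\<forall>k\<le>K. master_opt ct F (Ys ` {..<k}) (\<theta>s k) (Ys k))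
        \<and> (\<forall>k<K. \<theta>s k < FR n c z v E (Ys k))
        \<and> FR n c z v E (Ys K) \<le> \<theta>s K
        \<longrightarrow> (\<forall>Y\<in>F. FR n c z v E (Ys K) \<le> FR n c z v E Y))
   \<comment> \<open>the full ct reformulation has the same optimal value\<close>
   \<and> (\<exists>\<theta> Y. master_opt ct F F \<theta> Y)
   \<and> (\<forall>\<theta> Y. master_opt ct F F \<theta> Y \<longrightarrow> \<theta> = Min (FR n c z v E ` F))"
proof -
  have z_nonneg: "\<forall>j\<in>{1..n}. 0 \<le> z j"
    using assms(4) by (simp add: less_imp_le)
  have ord: "set (ord Yb) = Z - Yb" for Yb
    using assms(11) by blast
  interpret cutting_plane ct F "FR n c z v E"
    by (rule cutting_plane_FR[OF less_imp_le[OF assms(2)] assms(3) z_nonneg assms(5-7,9,10) ord assms(12)])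
  show ?thesis
    by (rule cutting_plane_correct)
qed

end
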